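(* Let $\Omega_n=\dfrac{\pi^{n/2}}{\Gamma\left(\frac n2+1\right)}$ for $n\in\mathbb{N}_0$, and \[ \varepsilon_1(n)=-\frac{\frac14\pi-4\pi^2+8\pi^3}{n^3},\qquad \varepsilon_2(n)=\varepsilon_1(n)+\frac{\frac38\pi-7\pi^2-12\pi^3+64\pi^4}{n^4}. \] Then for every $n\in\mathbb{N}$, \[ \sqrt{\frac{2\pi}{n+4\pi+\frac12}+\varepsilon_1(n)}<\frac{\Omega_n}{\Omega_{n-1}+\Omega_{n+1}}<\sqrt{\frac{2\pi}{n+4\pi+\frac12}+\varepsilon_2(n)}. \]
   Context: $\Omega_n$ is the volume of the unit ball in $\mathbb{R}^n$ ($\Omega_0=1$); $\Gamma$ is Euler's gamma function. *)

theory Defs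
  imports "HOL-Analysis.Analysis"
begin

text \<open>Volume of the unit ball in R^n: Omega n = pi^(n/2) / Gamma(n/2 + 1).\<close>
definition Omega :: "nat \<Rightarrow> real" where
  "Omega n = pi powr (real n / 2) / Gamma (real n / 2 + 1)"

definition eps1 :: "nat \<Rightarrow> real" where
  "eps1 n = - ((1/4) * pi - 4 * pi^2 + 8 * pi^3) / real n ^ 3"

definition eps2 :: "nat \<Rightarrow> real" where
  "eps2 n = eps1 n + ((3/8) * pi - 7 * pi^2 - 12 * pi^3 + 64 * pi^4) / real n ^ 4"

end

theory Submission
  imports Defs "HOL-Real_Asymp.Real_Asymp"
begin

text \<open>
  Since \<open>Omega (n + 1) = 2\<pi>/(n + 1) * Omega (n - 1)\<close>, the quotient \<open>V n\<close> of the theorem is an explicit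
  multiple of \<open>Omega n / Omega (n - 1)\<close>. Hence \<open>V (n + 2) = \<kappa> n * V n\<close> for an explicit rational
  function \<open>\<kappa>\<close> of \<open>n\<close> and \<open>\<pi>\<close> (\<open>Omega_quotient_factor\<close>), and log-convexity of \<open>\<Gamma>\<close> gives \<open>n * V(n)\<^sup>2 \<longrightarrow> 2\<pi>\<close>.
  If a sequence \<open>A\<close> satisfies \<open>\<kappa>(n)\<^sup>2 * A n < A (n + 2)\<close> and \<open>A n / V(n)\<^sup>2 \<longrightarrow> 1\<close>, then
  \<open>A / V\<^sup>2\<close> increases strictly to \<open>1\<close> along \<open>n, n + 2, n + 4, \<dots>\<close>, so \<open>A n < V(n)\<^sup>2\<close>.
  For the squares of both bounds this growth condition becomes, after clearing denominators, a
  polynomial inequality in \<open>n\<close> and \<open>\<pi>\<close>: expanded around the first admissible \<open>n\<close>, every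
  coefficient is a polynomial in \<open>\<pi>\<close> that is positive on \<open>[3.14159, 3.1416]\<close>. For \<open>n \<le> 9\<close> the
  lower bound is the square root of a negative number.
\<close>

lemma less_limit_of_step2_growth:
  fixes s A c :: "nat \<Rightarrow> real"
  assumes s_pos: "\<And>m. N \<le> m \<Longrightarrow> 0 < s m"
    and c_pos: "\<And>m. N \<le> m \<Longrightarrow> 0 < c m"
    and s_step: "\<And>m. N \<le> m \<Longrightarrow> s (m + 2) = c m * s m"
    and A_step: "\<And>m. N \<le> m \<Longrightarrow> c m * A m < A (m + 2)"
    and lim: "(\<lambda>m. A m / s m) \<longlonglongrightarrow> L"
    and "N \<le> n"
  shows "A n < L * s n"
proof -
  have ratio_step: "A m / s m < A (m + 2) / s (m + 2)" if "N \<le> m" for m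
  proof -
    have "A m / s m = c m * A m / s (m + 2)"
      unfolding s_step[OF that] using s_pos[OF that] c_pos[OF that] by simp
    also have "\<dots> < A (m + 2) / s (m + 2)"
      using A_step[OF that] s_pos[of "m + 2"] that by (simp add: divide_strict_right_mono)
    finally show ?thesis .
  qed
  define f where "f k = A (n + 2 * k) / s (n + 2 * k)" for k
  have "incseq f"
    unfolding incseq_Suc_iff f_def using ratio_step \<open>N \<le> n\<close> by (auto intro: less_imp_le simp: add.assoc)
  have "strict_mono (\<lambda>k. n + 2 * k)"
    by (rule strict_monoI) simp
  then have "f \<longlonglongrightarrow> L"
    using LIMSEQ_subseq_LIMSEQ[OF lim] unfolding f_def comp_def by blast
  with \<open>incseq f\<close> have "f 1 \<le> L"
    by (rule incseq_le)
  moreover have "f 0 < f 1"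
    using ratio_step[OF \<open>N \<le> n\<close>] by (simp add: f_def)
  ultimately have "A n / s n < L"
    by (simp add: f_def)
  then show ?thesis
    using s_pos[OF \<open>N \<le> n\<close>] by (simp add: divide_less_eq mult.commute)
qed

lemma sq_mult_divide_less_divide:
  fixes u v a b c d :: real
  assumes "0 < v" "0 < b" "0 < d" and "u^2 * a * d < v^2 * c * b"
  shows "(u / v)^2 * (a / b) < c / d"
  using assms by (simp add: power_divide divide_simps mult_ac)

lemma divide_less_sq_mult_divide:
  fixes u v a b c d :: real
  assumes "0 < v" "0 < b" "0 < d" and "v^2 * c * b < u^2 * a * d"
  shows "c / d < (u / v)^2 * (a / b)"
  using assms by (simp add: power_divide divide_simps mult_ac)

lemma Gamma_half_shift_sq_le:
  fixes a :: real
  assumes "0 < a"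
  shows "Gamma (a + 1/2)^2 \<le> Gamma a * Gamma (a + 1)"
proof -
  have "a + 1/2 = (1 - 1/2) *\<^sub>R a + (1/2) *\<^sub>R (a + 1)"
    by (simp add: field_simps)
  then have "ln (Gamma (a + 1/2)) \<le> (1/2) * ln (Gamma a) + (1/2) * ln (Gamma (a + 1))"
    using convex_onD[OF log_convex_Gamma_real, of "1/2" a "a + 1"] assms
    by simp
  moreover have "0 < Gamma a" "0 < Gamma (a + 1/2)" "0 < Gamma (a + 1)"
    using assms by simp_all
  ultimately show ?thesis
    by (subst ln_le_cancel_iff[symmetric]) (simp_all add: ln_mult ln_realpow)
qed

lemma Omega_pos: "0 < Omega n"
  unfolding Omega_def by (intro divide_pos_pos) auto

lemma Omega_Suc_Suc: "Omega (Suc (Suc n)) = 2 * pi / (real n + 2) * Omega n"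
proof -
  have "real n / 2 + 1 \<notin> \<int>\<^sub>\<le>\<^sub>0"
    by (auto dest: nonpos_Ints_nonpos)
  then have Gamma_eq: "Gamma (real (n + 2) / 2 + 1) = (real n / 2 + 1) * Gamma (real n / 2 + 1)"
    using Gamma_plus1[of "real n / 2 + 1"] by (simp add: add_divide_distrib add_ac)
  moreover have powr_eq: "pi powr (real (n + 2) / 2) = pi * pi powr (real n / 2)"
    by (simp add: add_divide_distrib powr_add)
  moreover have "0 < Gamma (real n / 2 + 1)"
    by simp
  ultimately have "Omega (n + 2) = 2 * pi / (real n + 2) * Omega n"
    unfolding Omega_def Gamma_eq powr_eq by (simp add: field_simps)
  then show ?thesis
    by simp
qed

lemma Omega_log_convex: "Omega n * Omega (n + 2) \<le> Omega (n + 1)^2"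
proof -
  define a where "a = real n / 2 + 1"
  have "0 < a" by (simp add: a_def)
  then have Gamma_pos: "0 < Gamma a" "0 < Gamma (a + 1/2)" "0 < Gamma (a + 1)"
    by simp_all
  have args: "real n / 2 + 1 = a" "real (n + 1) / 2 + 1 = a + 1/2" "real (n + 2) / 2 + 1 = a + 1"
    by (simp_all add: a_def field_simps)
  have "real n / 2 + real (n + 2) / 2 = real (n + 1) / 2 + real (n + 1) / 2"
    by (simp add: field_simps)
  then have "pi powr (real n / 2) * pi powr (real (n + 2) / 2) = (pi powr (real (n + 1) / 2))^2"
    by (simp only: power2_eq_square powr_add[symmetric])
  then have "Omega n * Omega (n + 2) = (pi powr (real (n + 1) / 2))^2 / (Gamma a * Gamma (a + 1))"
    unfolding Omega_def args by simp
  also have "\<dots> \<le> (pi powr (real (n + 1) / 2))^2 / Gamma (a + 1/2)^2"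
    by (rule divide_left_mono[OF Gamma_half_shift_sq_le[OF \<open>0 < a\<close>]]) (use Gamma_pos in auto)
  also have "\<dots> = Omega (n + 1)^2"
    unfolding Omega_def args by (simp add: power_divide)
  finally show ?thesis .
qed

definition Omega_ratio :: "nat \<Rightarrow> real" where
  "Omega_ratio n = Omega (Suc n) / Omega n"

lemma Omega_ratio_pos: "0 < Omega_ratio n"
  unfolding Omega_ratio_def using Omega_pos by simp

lemma Omega_ratio_mult_Suc: "Omega_ratio n * Omega_ratio (Suc n) = 2 * pi / (real n + 2)"
  unfolding Omega_ratio_def using Omega_pos[of n] Omega_pos[of "Suc n"] Omega_Suc_Suc[of n]
  by simp

lemma Omega_ratio_Suc_le: "Omega_ratio (Suc n) \<le> Omega_ratio n"
  unfolding Omega_ratio_def using Omega_log_convex[of n] Omega_pos[of n] Omega_pos[of "Suc n"]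
  by (simp add: divide_simps power2_eq_square mult.commute)

lemma Omega_ratio_sq_bounds:
  "2 * pi / (real n + 2) \<le> Omega_ratio n ^ 2"
  "Omega_ratio (Suc n) ^ 2 \<le> 2 * pi / (real n + 2)"
proof -
  have "Omega_ratio n * Omega_ratio (Suc n) \<le> Omega_ratio n * Omega_ratio n"
    using Omega_ratio_Suc_le Omega_ratio_pos by (rule mult_left_mono[OF _ less_imp_le])
  then show "2 * pi / (real n + 2) \<le> Omega_ratio n ^ 2"
    by (simp add: Omega_ratio_mult_Suc power2_eq_square)
  have "Omega_ratio (Suc n) * Omega_ratio (Suc n) \<le> Omega_ratio n * Omega_ratio (Suc n)"
    using Omega_ratio_Suc_le Omega_ratio_pos by (rule mult_right_mono[OF _ less_imp_le])
  then show "Omega_ratio (Suc n) ^ 2 \<le> 2 * pi / (real n + 2)"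
    by (simp add: Omega_ratio_mult_Suc power2_eq_square)
qed

lemma Omega_ratio_sq_asymp: "(\<lambda>n. Omega_ratio n ^ 2 * (real n + 1)) \<longlonglongrightarrow> 2 * pi"
proof (rule tendsto_sandwich)
  show "\<forall>\<^sub>F n in sequentially. 2 * pi / (real n + 2) * (real n + 1) \<le> Omega_ratio n ^ 2 * (real n + 1)"
    using Omega_ratio_sq_bounds(1) by (intro always_eventually allI mult_right_mono) auto
  show "\<forall>\<^sub>F n in sequentially. Omega_ratio n ^ 2 * (real n + 1) \<le> 2 * pi"
    using eventually_ge_at_top[of 1]
  proof eventually_elim
    case (elim n)
    then have "Omega_ratio (Suc (n - 1)) ^ 2 \<le> 2 * pi / (real n + 1)"
      using Omega_ratio_sq_bounds(2)[of "n - 1"] by (simp add: of_nat_diff add.commute)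
    with elim show ?case by (simp add: field_simps)
  qed
qed (real_asymp, simp)

lemma Omega_ratio_Suc_Suc:
  "Omega_ratio (Suc (Suc n)) = (real n + 2) / (real n + 3) * Omega_ratio n"
proof -
  have "Omega_ratio (Suc (Suc n)) = (2 * pi / (real n + 3)) / (2 * pi / (real n + 2)) * Omega_ratio n"
    unfolding Omega_ratio_def Omega_Suc_Suc by (simp add: add_ac)
  then show ?thesis
    by simp
qed

definition Omega_quotient :: "nat \<Rightarrow> real" where
  "Omega_quotient n = Omega n / (Omega (n - 1) + Omega (n + 1))"

lemma Omega_quotient_pos: "0 < Omega_quotient n"
  unfolding Omega_quotient_def using Omega_pos by (intro divide_pos_pos add_pos_pos)

lemma Omega_quotient_Suc:
  "Omega_quotient (Suc n) = (real n + 2) / (real n + 2 + 2 * pi) * Omega_ratio n"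
  unfolding Omega_quotient_def Omega_ratio_def using Omega_pos[of n] pi_gt_zero
  by (simp add: Omega_Suc_Suc field_simps)

definition Omega_quotient_factor :: "nat \<Rightarrow> real" where
  "Omega_quotient_factor n = (real n + 3) * (real n + 1 + 2 * pi) / ((real n + 2) * (real n + 3 + 2 * pi))"

lemma Omega_quotient_factor_pos: "0 < Omega_quotient_factor n"
  unfolding Omega_quotient_factor_def using pi_gt_zero by (simp add: add_pos_pos)

lemma Omega_quotient_add_two:
  assumes "1 \<le> n"
  shows "Omega_quotient (n + 2) = Omega_quotient_factor n * Omega_quotient n"
proof -
  obtain m where n: "n = Suc m" using assms by (cases n) auto
  have q2: "Omega_quotient (n + 2) = (real m + 4) / (real m + 4 + 2 * pi) * ((real m + 2) / (real m + 3) * Omega_ratio m)"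
    using Omega_quotient_Suc[of "m + 2"] by (simp add: n Omega_ratio_Suc_Suc add_ac)
  have q0: "Omega_quotient n = (real m + 2) / (real m + 2 + 2 * pi) * Omega_ratio m"
    by (simp add: n Omega_quotient_Suc)
  have "real m + 2 + 2 * pi \<noteq> 0" "real m + 4 + 2 * pi \<noteq> 0"
    using pi_gt_zero by linarith+
  then show ?thesis
    unfolding q2 q0 Omega_quotient_factor_def unfolding n by (simp add: divide_simps) (simp add: algebra_simps)
qed

lemma Omega_quotient_sq_asymp: "(\<lambda>n. Omega_quotient n ^ 2 * real n) \<longlonglongrightarrow> 2 * pi"
proof -
  have "(\<lambda>n. Omega_ratio n ^ 2 * (real n + 1) * ((real n + 2) / (real n + 2 + 2 * pi))^2)
          \<longlonglongrightarrow> 2 * pi * 1"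
    by (intro tendsto_mult Omega_ratio_sq_asymp) real_asymp
  moreover have "Omega_quotient (Suc n) ^ 2 * real (Suc n)
      = Omega_ratio n ^ 2 * (real n + 1) * ((real n + 2) / (real n + 2 + 2 * pi))^2" for n
    by (simp add: Omega_quotient_Suc power_mult_distrib power_divide ac_simps)
  ultimately have "(\<lambda>n. Omega_quotient (Suc n) ^ 2 * real (Suc n)) \<longlonglongrightarrow> 2 * pi"
    by simp
  then show ?thesis
    by (rule filterlim_sequentially_Suc[THEN iffD1])
qed

lemma divide_Omega_quotient_sq_tendsto:
  assumes "(\<lambda>n. A n * real n) \<longlonglongrightarrow> 2 * pi"
  shows "(\<lambda>n. A n / Omega_quotient n ^ 2) \<longlonglongrightarrow> 1"
proof -
  have "(\<lambda>n. (A n * real n) / (Omega_quotient n ^ 2 * real n)) \<longlonglongrightarrow> 1"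
    using tendsto_divide[OF assms Omega_quotient_sq_asymp] by simp
  moreover have "\<forall>\<^sub>F n in sequentially. (A n * real n) / (Omega_quotient n ^ 2 * real n) = A n / Omega_quotient n ^ 2"
    using eventually_gt_at_top[of 0] by eventually_elim simp
  ultimately show ?thesis
    by (rule Lim_transform_eventually)
qed

lemma less_mult_Omega_quotient_sq_of_step_growth:
  fixes A :: "nat \<Rightarrow> real"
  assumes "1 \<le> N"
    and A_step: "\<And>m. N \<le> m \<Longrightarrow> Omega_quotient_factor m ^ 2 * A m < A (m + 2)"
    and lim: "(\<lambda>m. A m / Omega_quotient m ^ 2) \<longlonglongrightarrow> L"
    and "N \<le> n"
  shows "A n < L * Omega_quotient n ^ 2"
proof (rule less_limit_of_step2_growth[where c = "\<lambda>m. Omega_quotient_factor m ^ 2", OF _ _ _ A_step lim \<open>N \<le> n\<close>])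
  fix m assume "N \<le> m"
  show "0 < Omega_quotient m ^ 2"
    using Omega_quotient_pos[of m] by simp
  show "0 < Omega_quotient_factor m ^ 2"
    using Omega_quotient_factor_pos[of m] by simp
  show "Omega_quotient (m + 2) ^ 2 = Omega_quotient_factor m ^ 2 * Omega_quotient m ^ 2"
    using \<open>1 \<le> N\<close> \<open>N \<le> m\<close> by (simp only: Omega_quotient_add_two power_mult_distrib)
qed

lemma pi_power_bounds:
  "(314159/100000)^k \<le> pi^k" "pi^k \<le> (31416/10000)^k"
  using pi_approx by (intro power_mono; simp)+

lemmas pi_power_bounds_numeral =
  pi_power_bounds[of 1, simplified]
  pi_power_bounds[of 2, unfolded power_divide, simplified]
  pi_power_bounds[of 3, unfolded power_divide, simplified]
  pi_power_bounds[of 4, unfolded power_divide, simplified]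
  pi_power_bounds[of 5, unfolded power_divide, simplified]
  pi_power_bounds[of 6, unfolded power_divide, simplified]
  pi_power_bounds[of 7, unfolded power_divide, simplified]
  pi_power_bounds[of 8, unfolded power_divide, simplified]

definition lower_bound_num :: "real \<Rightarrow> real" where
  "lower_bound_num x = 2*pi*x^3 - (1/4*pi - 4*pi^2 + 8*pi^3) * (x + 4*pi + 1/2)"

lemma lower_bound_num_neg:
  assumes "k \<in> {1..9::nat}"
  shows "lower_bound_num (real k) < 0"
proof -
  have expand: "lower_bound_num x = (2*x^3 - x/4 - 1/8)*pi + (4*x+1)*pi^2 + (12 - 8*x)*pi^3 - 32*pi^4" for x
    unfolding lower_bound_num_def by algebra
  have "k \<in> {1,2,3,4,5,6,7,8,9}" using assms by auto
  then show ?thesis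
    unfolding expand using pi_power_bounds_numeral by auto
qed

lemma lower_bound_num_step:
  assumes "10 \<le> x"
  shows "((x+3) * (x+1+2*pi))^2 * lower_bound_num x * ((x+2)^3 * (x+2+4*pi+1/2))
       < ((x+2) * (x+3+2*pi))^2 * lower_bound_num (x+2) * (x^3 * (x+4*pi+1/2))"
proof -
  define t where "t = x - 10"
  define c0 where "c0 = 68901300*pi - 1122782544*pi^2 - 2708549424*pi^3 + 9390191616*pi^4 + 5417049600*pi^5 + 1084170240*pi^6 + 75792384*pi^7"
  define c1 where "c1 = 41262039*pi - 685323804*pi^2 - 1580729604*pi^3 + 5820941568*pi^4 + 2825210496*pi^5 + 466999296*pi^6 + 25976832*pi^7"
  define c2 where "c2 = 42305187/4*pi - 179064143*pi^2 - 394474933*pi^3 + 1543006400*pi^4 + 613356320*pi^5 + 80424448*pi^6 + 3340288*pi^7"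
  define c3 where "c3 = 24066129/16*pi - 103849145/4*pi^2 - 218241735/4*pi^3 + 226750064*pi^4 + 70952088*pi^5 + 6921856*pi^6 + 190976*pi^7"
  define c4 where "c4 = 1025483/8*pi - 9023751/4*pi^2 - 4516499*pi^3 + 19952464*pi^4 + 4612512*pi^5 + 297728*pi^6 + 4096*pi^7"
  define c5 where "c5 = 104741/16*pi - 234961/2*pi^2 - 223733*pi^3 + 1051360*pi^4 + 159776*pi^5 + 5120*pi^6"
  define c6 where "c6 = 371/2*pi - 3395*pi^2 - 6140*pi^3 + 30720*pi^4 + 2304*pi^5"
  define c7 where "c7 = 9/4*pi - 42*pi^2 - 72*pi^3 + 384*pi^4"
  have "0 < c0" "0 < c1" "0 < c2" "0 < c3" "0 < c4" "0 < c5" "0 < c6" "0 < c7"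
    unfolding c0_def c1_def c2_def c3_def c4_def c5_def c6_def c7_def
    using pi_power_bounds_numeral by linarith+
  moreover have "0 \<le> t" using assms by (simp add: t_def)
  ultimately have "0 < c0 + c1*t + c2*t^2 + c3*t^3 + c4*t^4 + c5*t^5 + c6*t^6 + c7*t^7"
    by (auto intro!: add_pos_nonneg mult_nonneg_nonneg)
  also have "\<dots> = ((x+2) * (x+3+2*pi))^2 * lower_bound_num (x+2) * (x^3 * (x+4*pi+1/2))
                 - ((x+3) * (x+1+2*pi))^2 * lower_bound_num x * ((x+2)^3 * (x+2+4*pi+1/2))"
    unfolding t_def c0_def c1_def c2_def c3_def c4_def c5_def c6_def c7_def lower_bound_num_def
    by algebra
  finally show ?thesis by simp
qed

definition upper_bound_num :: "real \<Rightarrow> real" where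
  "upper_bound_num x = 2*pi*x^4 - (1/4*pi - 4*pi^2 + 8*pi^3) * x * (x + 4*pi + 1/2)
                 + (3/8*pi - 7*pi^2 - 12*pi^3 + 64*pi^4) * (x + 4*pi + 1/2)"

lemma upper_bound_num_step:
  assumes "1 \<le> x"
  shows "((x+2) * (x+3+2*pi))^2 * upper_bound_num (x+2) * (x^4 * (x+4*pi+1/2))
       < ((x+3) * (x+1+2*pi))^2 * upper_bound_num x * ((x+2)^4 * (x+2+4*pi+1/2))"
proof -
  define t where "t = x - 1"
  define c0 where "c0 = 9963/2*pi - 157113/2*pi^2 - 7605945/8*pi^3 - 2264355*pi^4 + 2916252*pi^5 + 14443200*pi^6 + 15420672*pi^7 + 5271552*pi^8"
  define c1 where "c1 = 62235/4*pi - 2222793/8*pi^2 - 5968713/2*pi^3 - 5889906*pi^4 + 11694624*pi^5 + 40251264*pi^6 + 35030016*pi^7 + 9560064*pi^8"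
  define c2 where "c2 = 664587/32*pi - 839739/2*pi^2 - 16245769/4*pi^3 - 6468366*pi^4 + 18749368*pi^5 + 47752576*pi^6 + 33394176*pi^7 + 7086080*pi^8"
  define c3 where "c3 = 62049/4*pi - 1421261/4*pi^2 - 6262055/2*pi^3 - 3846896*pi^4 + 16275312*pi^5 + 31300096*pi^6 + 17091584*pi^7 + 2686976*pi^8"
  define c4 where "c4 = 113835/16*pi - 184678*pi^2 - 11961217/8*pi^3 - 1304035*pi^4 + 8504892*pi^5 + 12239552*pi^6 + 4943104*pi^7 + 520192*pi^8"
  define c5 where "c5 = 16465/8*pi - 483825/8*pi^2 - 452525*pi^3 - 233134*pi^4 + 2760848*pi^5 + 2852480*pi^6 + 763904*pi^7 + 40960*pi^8"
  define c6 where "c6 = 11763/32*pi - 12199*pi^2 - 169359/2*pi^3 - 12756*pi^4 + 545488*pi^5 + 366336*pi^6 + 49152*pi^7"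
  define c7 where "c7 = 297/8*pi - 2773/2*pi^2 - 8946*pi^3 + 2040*pi^4 + 60032*pi^5 + 19968*pi^6"
  define c8 where "c8 = 13/8*pi - 68*pi^2 - 408*pi^3 + 256*pi^4 + 2816*pi^5"
  have "0 < c0" "0 < c1" "0 < c2" "0 < c3" "0 < c4" "0 < c5" "0 < c6" "0 < c7" "0 < c8"
    unfolding c0_def c1_def c2_def c3_def c4_def c5_def c6_def c7_def c8_def
    using pi_power_bounds_numeral by linarith+
  moreover have "0 \<le> t" using assms by (simp add: t_def)
  ultimately have "0 < c0 + c1*t + c2*t^2 + c3*t^3 + c4*t^4 + c5*t^5 + c6*t^6 + c7*t^7 + c8*t^8"
    by (auto intro!: add_pos_nonneg mult_nonneg_nonneg)
  also have "\<dots> = ((x+3) * (x+1+2*pi))^2 * upper_bound_num x * ((x+2)^4 * (x+2+4*pi+1/2))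
                 - ((x+2) * (x+3+2*pi))^2 * upper_bound_num (x+2) * (x^4 * (x+4*pi+1/2))"
    unfolding t_def c0_def c1_def c2_def c3_def c4_def c5_def c6_def c7_def c8_def upper_bound_num_def
    by algebra
  finally show ?thesis by simp
qed

lemma lower_bound_eq:
  assumes "0 < n"
  shows "2 * pi / (real n + 4 * pi + 1/2) + eps1 n
       = lower_bound_num (real n) / (real n ^ 3 * (real n + 4 * pi + 1/2))"
proof -
  have "real n + 4 * pi + 1/2 \<noteq> 0" using pi_gt_zero by linarith
  with assms show ?thesis
    unfolding eps1_def lower_bound_num_def by (simp add: divide_simps) algebra
qed

lemma upper_bound_eq:
  assumes "0 < n"
  shows "2 * pi / (real n + 4 * pi + 1/2) + eps2 n
       = upper_bound_num (real n) / (real n ^ 4 * (real n + 4 * pi + 1/2))"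
proof -
  have "real n + 4 * pi + 1/2 \<noteq> 0" using pi_gt_zero by linarith
  with assms show ?thesis
    unfolding eps2_def eps1_def upper_bound_num_def by (simp add: divide_simps) algebra
qed

lemma lower_bound_step:
  assumes "10 \<le> n"
  shows "Omega_quotient_factor n ^ 2 * (2 * pi / (real n + 4 * pi + 1/2) + eps1 n)
       < 2 * pi / (real (n + 2) + 4 * pi + 1/2) + eps1 (n + 2)"
proof -
  have "0 < n" "0 < n + 2" using assms by simp_all
  have "0 < real n + 4 * pi + 1/2" "0 < real n + 3 + 2 * pi" using pi_gt_zero by linarith+
  then show ?thesis
    using assms lower_bound_num_step[of "real n"]
    unfolding Omega_quotient_factor_def lower_bound_eq[OF \<open>0 < n\<close>] lower_bound_eq[OF \<open>0 < n + 2\<close>]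
    by (intro sq_mult_divide_less_divide) (simp_all add: add_ac)
qed

lemma upper_bound_step:
  assumes "1 \<le> n"
  shows "2 * pi / (real (n + 2) + 4 * pi + 1/2) + eps2 (n + 2)
       < Omega_quotient_factor n ^ 2 * (2 * pi / (real n + 4 * pi + 1/2) + eps2 n)"
proof -
  have "0 < n" "0 < n + 2" using assms by simp_all
  have "0 < real n + 4 * pi + 1/2" "0 < real n + 3 + 2 * pi" using pi_gt_zero by linarith+
  then show ?thesis
    using assms upper_bound_num_step[of "real n"]
    unfolding Omega_quotient_factor_def upper_bound_eq[OF \<open>0 < n\<close>] upper_bound_eq[OF \<open>0 < n + 2\<close>]
    by (intro divide_less_sq_mult_divide) (simp_all add: add_ac)
qed

lemma Omega_quotient_sq_gt_lower:
  assumes "1 \<le> n"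
  shows "2 * pi / (real n + 4 * pi + 1/2) + eps1 n < Omega_quotient n ^ 2"
proof (cases "n \<le> 9")
  case True
  have "0 < real n + 4 * pi + 1/2"
    using pi_gt_zero by linarith
  then have "0 < real n ^ 3 * (real n + 4 * pi + 1/2)"
    using assms by simp
  moreover have "lower_bound_num (real n) < 0"
    using True assms by (intro lower_bound_num_neg) simp
  ultimately have "2 * pi / (real n + 4 * pi + 1/2) + eps1 n < 0"
    using assms by (simp add: lower_bound_eq divide_neg_pos)
  then show ?thesis
    using zero_less_power[OF Omega_quotient_pos[of n], of 2] by linarith
next
  case False
  have "(\<lambda>m. (2 * pi / (real m + 4 * pi + 1/2) + eps1 m) / Omega_quotient m ^ 2) \<longlonglongrightarrow> 1"
    by (rule divide_Omega_quotient_sq_tendsto) (unfold eps1_def, real_asymp)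
  then have "2 * pi / (real n + 4 * pi + 1/2) + eps1 n < 1 * Omega_quotient n ^ 2"
    using False by (intro less_mult_Omega_quotient_sq_of_step_growth[where N = 10] lower_bound_step) auto
  then show ?thesis
    by simp
qed

lemma Omega_quotient_sq_lt_upper:
  assumes "1 \<le> n"
  shows "Omega_quotient n ^ 2 < 2 * pi / (real n + 4 * pi + 1/2) + eps2 n"
proof -
  have "(\<lambda>m. (2 * pi / (real m + 4 * pi + 1/2) + eps2 m) / Omega_quotient m ^ 2) \<longlonglongrightarrow> 1"
    by (rule divide_Omega_quotient_sq_tendsto) (unfold eps2_def eps1_def, real_asymp)
  from tendsto_minus[OF this]
  have "(\<lambda>m. - (2 * pi / (real m + 4 * pi + 1/2) + eps2 m) / Omega_quotient m ^ 2) \<longlonglongrightarrow> - 1"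
    by (simp only: minus_divide_left)
  moreover have "Omega_quotient_factor m ^ 2 * - (2 * pi / (real m + 4 * pi + 1/2) + eps2 m)
      < - (2 * pi / (real (m + 2) + 4 * pi + 1/2) + eps2 (m + 2))" if "1 \<le> m" for m
    using upper_bound_step[OF that] by (simp only: mult_minus_right neg_less_iff_less)
  ultimately have "- (2 * pi / (real n + 4 * pi + 1/2) + eps2 n) < - 1 * Omega_quotient n ^ 2"
    using assms by (intro less_mult_Omega_quotient_sq_of_step_growth[where N = 1]) auto
  then show ?thesis
    by simp
qed

theorem theorem12:
  fixes n :: nat
  assumes "n \<ge> 1"
  shows "sqrt (2 * pi / (real n + 4 * pi + 1/2) + eps1 n)
           < Omega n / (Omega (n - 1) + Omega (n + 1))
       \<and> Omega n / (Omega (n - 1) + Omega (n + 1))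
           < sqrt (2 * pi / (real n + 4 * pi + 1/2) + eps2 n)"
proof -
  have "sqrt (Omega_quotient n ^ 2) = Omega_quotient n"
    using Omega_quotient_pos[of n] by simp
  then show ?thesis
    using real_sqrt_less_mono[OF Omega_quotient_sq_gt_lower[OF assms]]
      real_sqrt_less_mono[OF Omega_quotient_sq_lt_upper[OF assms]]
    unfolding Omega_quotient_def by simp
qed

end
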